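(* Let $M\in\mathbb{R}_+^{p\times q}$ be a slack matrix of a polyhedral cone, let $k=\operatorname{rank}(M)$, and let $M=AB$ with $A\in\mathbb{R}^{p\times k}$, $B\in\mathbb{R}^{k\times q}$, $\operatorname{rank}(A)=\operatorname{rank}(B)=k$. Let $K\subseteq\mathbb{R}^k$ be the cone generated by the rows of $A$. Then $K=\{x\in\mathbb{R}^k : x^TB\ge 0\}$, i.e., the columns of $B$ form an $\mathcal{H}$-representation of $K$. In particular, $M$ is a slack matrix of $K$.
   Context: A matrix $S\in\mathbb{R}^{p\times q}$ is a slack matrix of a polyhedral cone $K\subseteq\mathbb{R}^n$ if there are matrices $A\in\mathbb{R}^{p\times n}$ and $B\in\mathbb{R}^{n\times q}$ with $K=\{x\in\mathbb{R}^n: x^TB\ge 0\}=\{y^TA: y\in\mathbb{R}_+^p\}$ (the columns of $B$ form an $\mathcal{H}$-representation, the rows of $A$ a $\mathcal{V}$-representation of $K$) and $S=AB$. A matrix is a slack matrix of a polyhedral cone if it is a slack matrix of some polyhedral cone. *)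

theory Defs
  imports "Jordan_Normal_Form.Matrix" "Jordan_Normal_Form.DL_Rank"
begin

(* H-cone {x in R^n : x^T B >= 0}: x^T B >= 0 means x . (column j of B) >= 0 for every column j *)
definition H_cone :: "nat \<Rightarrow> real mat \<Rightarrow> real vec set" where
  "H_cone n B = {x \<in> carrier_vec n. \<forall>j < dim_col B. x \<bullet> col B j \<ge> 0}"

(* V-cone {y^T A : y in R_+^p}: cone generated by the rows of A; y^T A = A^T *v y *)
definition V_cone :: "real mat \<Rightarrow> real vec set" where
  "V_cone A = {A\<^sup>T *\<^sub>v y | y. y \<in> carrier_vec (dim_row A) \<and> (\<forall>i < dim_row A. y $ i \<ge> 0)}"

definition slack_matrix_of :: "nat \<Rightarrow> real mat \<Rightarrow> real vec set \<Rightarrow> bool" where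
  "slack_matrix_of n S K \<longleftrightarrow>
     (\<exists>A B. A \<in> carrier_mat (dim_row S) n \<and> B \<in> carrier_mat n (dim_col S) \<and>
            K = H_cone n B \<and> K = V_cone A \<and> S = A * B)"

definition is_slack_matrix :: "real mat \<Rightarrow> bool" where
  "is_slack_matrix S \<longleftrightarrow> (\<exists>n K. slack_matrix_of n S K)"

end

(* Let M = A'B' exhibit M as a slack matrix of some cone. If x^T B >= 0, write x = A^T w, which is
   possible because A has full column rank. Then w^T M = x^T B >= 0, so A'^T w satisfies the
   inequalities B' and hence equals A'^T y for some y >= 0. Now y^T M = w^T M says
   (A^T y)^T B = x^T B, and since B has full row rank, x = A^T y lies in the cone spanned by the
   rows of A. The converse inclusion is the nonnegativity of M. *)

theory Submission
  imports Defs
begin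

lemma scalar_prod_self_eq_0D:
  fixes v :: "'a :: linordered_idom vec"
  assumes "v \<in> carrier_vec n" and "v \<bullet> v = 0"
  shows "v = 0\<^sub>v n"
proof -
  have "(\<Sum>i\<in>{0..<n}. v $ i * v $ i) = 0"
    using assms unfolding scalar_prod_def by auto
  hence "\<forall>i\<in>{0..<n}. v $ i * v $ i = 0"
    by (subst (asm) sum_nonneg_eq_0_iff) auto
  thus ?thesis using assms by (intro eq_vecI) auto
qed

context vec_space
begin

lemma maximal_lin_indpt_subset_exists:
  "\<exists>S. maximal S (\<lambda>T. T \<subseteq> set (cols A) \<and> lin_indpt T)"
  using maximal_exists[of "\<lambda>T. T \<subseteq> set (cols A) \<and> lin_indpt T" "card (set (cols A))" "{}"]
  by (meson List.finite_set card_mono empty_iff empty_subsetI finite_lin_indpt2 rev_finite_subset)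

lemma distinct_cols_if_rank_eq_nc:
  assumes A: "A \<in> carrier_mat n nc" and r: "rank A = nc"
  shows "distinct (cols A)"
proof -
  obtain S where S: "maximal S (\<lambda>T. T \<subseteq> set (cols A) \<and> lin_indpt T)"
    using maximal_lin_indpt_subset_exists by blast
  have "nc = card S" using rank_card_indpt[OF A S] r by simp
  also have "\<dots> \<le> card (set (cols A))"
    using S unfolding maximal_def by (simp add: card_mono)
  finally have "length (cols A) \<le> card (set (cols A))" using A by simp
  thus ?thesis using card_distinct card_length le_antisym by blast
qed

lemma mult_vec_eq_0_if_rank_eq_nc:
  assumes A: "A \<in> carrier_mat n nc" and r: "rank A = nc"
    and z: "z \<in> carrier_vec nc" and Az: "A *\<^sub>v z = 0\<^sub>v n"
  shows "z = 0\<^sub>v nc"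
proof (rule ccontr)
  have dist: "distinct (cols A)" using distinct_cols_if_rank_eq_nc[OF A r] .
  assume "z \<noteq> 0\<^sub>v nc"
  with lin_depI[OF A z _ Az dist] full_rank_lin_indpt[OF A r dist] show False by blast
qed

lemma span_cols_eq_carrier_if_rank_eq_n:
  assumes A: "A \<in> carrier_mat n nc" and r: "rank A = n"
  shows "span (set (cols A)) = carrier_vec n"
proof -
  obtain S where S: "maximal S (\<lambda>T. T \<subseteq> set (cols A) \<and> lin_indpt T)"
    using maximal_lin_indpt_subset_exists by blast
  have SA: "S \<subseteq> set (cols A)" and li: "lin_indpt S" using S unfolding maximal_def by auto
  have colsA: "set (cols A) \<subseteq> carrier_vec n" using A cols_dim by blast
  have "basis S"
  proof (rule dim_li_is_basis)
    show "finite S" using SA finite_subset by blast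
    show "dim \<le> card S" using rank_card_indpt[OF A S] r dim_is_n by simp
  qed (use SA colsA li in auto)
  hence "carrier_vec n = span S" unfolding basis_def by simp
  also have "\<dots> \<subseteq> span (set (cols A))" using span_is_monotone[OF SA] .
  finally show ?thesis using span_is_subset2[OF colsA] by auto
qed

end

lemma eq_if_scalar_prod_cols_eq_rank_eq_n:
  fixes A :: "'a :: linordered_field mat"
  assumes A: "A \<in> carrier_mat n nc" and r: "vec_space.rank n A = n"
    and x: "x \<in> carrier_vec n" and y: "y \<in> carrier_vec n"
    and eq: "\<forall>j < nc. x \<bullet> col A j = y \<bullet> col A j"
  shows "x = y"
proof -
  interpret vec_space "TYPE('a)" n .
  have colsA: "set (cols A) \<subseteq> carrier_vec n" using A cols_dim by blast
  have xy: "x - y \<in> carrier_vec n" using x y by simp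
  have "x - y \<in> orthogonal_complement (set (cols A))"
    using xy eq A x y unfolding orthogonal_complement_def
    by (auto simp: in_set_conv_nth minus_scalar_prod_distrib)
  hence "x - y \<in> orthogonal_complement (carrier_vec n)"
    using span_cols_eq_carrier_if_rank_eq_n[OF A r] in_orthogonal_complement_span[OF colsA] by simp
  hence "(x - y) \<bullet> (x - y) = 0" using xy unfolding orthogonal_complement_def by blast
  hence "x - y = 0\<^sub>v n" using scalar_prod_self_eq_0D[OF xy] by simp
  show ?thesis
  proof (rule eq_vecI)
    fix i assume "i < dim_vec y"
    hence "(x - y) $ i = 0" "i < n" using \<open>x - y = 0\<^sub>v n\<close> y by auto
    thus "x $ i = y $ i" using y by simp
  qed (use x y in simp)
qed

lemma transpose_mult_vec_surj_if_rank_eq_nc: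
  fixes A :: "'a :: linordered_field mat"
  assumes A: "A \<in> carrier_mat n nc" and r: "vec_space.rank n A = nc"
    and x: "x \<in> carrier_vec nc"
  obtains w where "w \<in> carrier_vec n" and "A\<^sup>T *\<^sub>v w = x"
proof -
  \<comment> \<open>the Gram matrix is nonsingular since \<open>A z = 0\<close> follows from \<open>(A z) \<bullet> (A z) = z \<bullet> (G z) = 0\<close>\<close>
  define G where "G = A\<^sup>T * A"
  have AT: "A\<^sup>T \<in> carrier_mat nc n" using A by simp
  have G: "G \<in> carrier_mat nc nc" unfolding G_def using AT A by simp
  have "det G \<noteq> 0"
  proof
    assume "det G = 0"
    then obtain z where z: "z \<in> carrier_vec nc" "z \<noteq> 0\<^sub>v nc" "G *\<^sub>v z = 0\<^sub>v nc"
      using det_0_iff_vec_prod_zero_field[OF G] by blast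
    have Az: "A *\<^sub>v z \<in> carrier_vec n" using A z by simp
    have "(A *\<^sub>v z) \<bullet> (A *\<^sub>v z) = (A\<^sup>T *\<^sub>v (A *\<^sub>v z)) \<bullet> z"
      using transpose_vec_mult_scalar[OF A z(1) Az] by simp
    also have "A\<^sup>T *\<^sub>v (A *\<^sub>v z) = G *\<^sub>v z"
      unfolding G_def using assoc_mult_mat_vec[OF AT A z(1)] by simp
    finally have "A *\<^sub>v z = 0\<^sub>v n" using z(1,3) scalar_prod_self_eq_0D[OF Az] by simp
    with z show False
      using vec_space.mult_vec_eq_0_if_rank_eq_nc[OF A r z(1)] by blast
  qed
  from det_non_zero_imp_unit[OF G this, unfolded Units_def, of "()"]
  obtain H where H: "H \<in> carrier_mat nc nc" and GH: "G * H = 1\<^sub>m nc"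
    by (auto simp: ring_mat_def)
  have Hx: "H *\<^sub>v x \<in> carrier_vec nc" using H x by simp
  show ?thesis
  proof
    show "A *\<^sub>v (H *\<^sub>v x) \<in> carrier_vec n" using A Hx by simp
    have "A\<^sup>T *\<^sub>v (A *\<^sub>v (H *\<^sub>v x)) = G *\<^sub>v (H *\<^sub>v x)"
      unfolding G_def using assoc_mult_mat_vec[OF AT A Hx] by simp
    also have "\<dots> = (G * H) *\<^sub>v x" using G H x by simp
    finally show "A\<^sup>T *\<^sub>v (A *\<^sub>v (H *\<^sub>v x)) = x" using GH x by simp
  qed
qed

lemma transpose_mult_vec_scalar_prod_col:
  fixes A :: "'a :: comm_semiring_0 mat"
  assumes A: "A \<in> carrier_mat p n" and B: "B \<in> carrier_mat n q"
    and w: "w \<in> carrier_vec p" and j: "j < q"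
  shows "(A\<^sup>T *\<^sub>v w) \<bullet> col B j = w \<bullet> col (A * B) j"
  unfolding col_mult2[OF A B j] using transpose_vec_mult_scalar[OF A _ w, of "col B j"] B j by simp

lemma transpose_mult_vec_in_H_cone_iff:
  assumes A: "A \<in> carrier_mat p n" and B: "B \<in> carrier_mat n q" and w: "w \<in> carrier_vec p"
  shows "A\<^sup>T *\<^sub>v w \<in> H_cone n B \<longleftrightarrow> (\<forall>j < q. w \<bullet> col (A * B) j \<ge> 0)"
  using A B w by (simp add: H_cone_def transpose_mult_vec_scalar_prod_col)

lemma V_cone_subset_H_cone_if_nonneg:
  assumes A: "A \<in> carrier_mat p n" and B: "B \<in> carrier_mat n q"
    and nonneg: "\<forall>i < p. \<forall>j < q. (A * B) $$ (i, j) \<ge> 0"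
  shows "V_cone A \<subseteq> H_cone n B"
proof
  fix x assume "x \<in> V_cone A"
  then obtain y where x: "x = A\<^sup>T *\<^sub>v y" and y: "y \<in> carrier_vec p" and "\<forall>i < p. y $ i \<ge> 0"
    unfolding V_cone_def using A by auto
  hence "\<forall>j < q. y \<bullet> col (A * B) j \<ge> 0"
    using A B nonneg unfolding scalar_prod_def by (auto intro!: sum_nonneg)
  thus "x \<in> H_cone n B" unfolding x using transpose_mult_vec_in_H_cone_iff[OF A B y] by blast
qed

lemma H_cone_subset_V_cone_if_same_product:
  assumes A: "A \<in> carrier_mat p k" and B: "B \<in> carrier_mat k q"
    and rA: "vec_space.rank p A = k" and rB: "vec_space.rank k B = k"
    and A': "A' \<in> carrier_mat p n" and B': "B' \<in> carrier_mat n q"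
    and prod: "A' * B' = A * B" and H'V': "H_cone n B' \<subseteq> V_cone A'"
  shows "H_cone k B \<subseteq> V_cone A"
proof
  fix x assume xH: "x \<in> H_cone k B"
  hence x: "x \<in> carrier_vec k" unfolding H_cone_def by blast
  obtain w where w: "w \<in> carrier_vec p" and Aw: "A\<^sup>T *\<^sub>v w = x"
    using transpose_mult_vec_surj_if_rank_eq_nc[OF A rA x] .
  have "A'\<^sup>T *\<^sub>v w \<in> H_cone n B'"
    using xH Aw prod transpose_mult_vec_in_H_cone_iff[OF A B w]
      transpose_mult_vec_in_H_cone_iff[OF A' B' w] by simp
  with H'V' obtain y where y: "y \<in> carrier_vec p" and "\<forall>i < p. y $ i \<ge> 0"
    and A'y: "A'\<^sup>T *\<^sub>v y = A'\<^sup>T *\<^sub>v w"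
    unfolding V_cone_def using A' by auto
  \<comment> \<open>both sides equal the slacks of \<open>A'\<^sup>T y = A'\<^sup>T w\<close> with respect to \<open>B'\<close>\<close>
  have "(A\<^sup>T *\<^sub>v y) \<bullet> col B j = x \<bullet> col B j" if j: "j < q" for j
    using transpose_mult_vec_scalar_prod_col[OF A B _ j] transpose_mult_vec_scalar_prod_col[OF A' B' _ j]
      y w A'y Aw prod by metis
  hence "A\<^sup>T *\<^sub>v y = x"
    using eq_if_scalar_prod_cols_eq_rank_eq_n[OF B rB] A x y by simp
  thus "x \<in> V_cone A" unfolding V_cone_def using y \<open>\<forall>i < p. y $ i \<ge> 0\<close> A by auto
qed

theorem lemma2p5:
  fixes M A B :: "real mat" and p q k :: nat and K :: "real vec set"
  assumes "M \<in> carrier_mat p q"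
    and "\<forall>i < p. \<forall>j < q. M $$ (i, j) \<ge> 0"
    and "is_slack_matrix M"
    and "k = vec_space.rank p M"
    and "A \<in> carrier_mat p k" and "B \<in> carrier_mat k q"
    and "vec_space.rank p A = k" and "vec_space.rank k B = k"
    and "M = A * B"
    and "K = V_cone A"
  shows "K = H_cone k B \<and> slack_matrix_of k M K"
proof -
  from assms(3) obtain n A' B' where A': "A' \<in> carrier_mat p n" and B': "B' \<in> carrier_mat n q"
    and H'V': "H_cone n B' = V_cone A'" and M': "M = A' * B'"
    using assms(1) unfolding is_slack_matrix_def slack_matrix_of_def by auto
  have "V_cone A \<subseteq> H_cone k B"
    using V_cone_subset_H_cone_if_nonneg assms(2,5,6,9) by blast
  moreover have "H_cone k B \<subseteq> V_cone A"
    using H_cone_subset_V_cone_if_same_product[OF assms(5-8) A' B'] H'V' M' assms(9) by simp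
  ultimately have "K = H_cone k B" using assms(10) by blast
  thus ?thesis using assms(1,5,6,9,10) unfolding slack_matrix_of_def by auto
qed

end
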